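(* For every $\tau\in\mathbb{H}^2$, with theta constants evaluated at $(0,\tau)$, $$\theta^3\begin{bmatrix}1\\ 0\end{bmatrix}\theta\begin{bmatrix}1\\ \frac23\end{bmatrix}-\theta^4\begin{bmatrix}1\\ \frac13\end{bmatrix}+\theta^4\begin{bmatrix}1\\ \frac23\end{bmatrix}=0.$$
   Context: $\mathbb{H}^2$ is the upper half-plane. For $\epsilon,\epsilon'\in\mathbb{R}$, $\theta\begin{bmatrix}\epsilon\\ \epsilon'\end{bmatrix}(\zeta,\tau)=\sum_{n\in\mathbb{Z}}\exp\!\Big(2\pi i\Big[\tfrac12\big(n+\tfrac{\epsilon}{2}\big)^2\tau+\big(n+\tfrac{\epsilon}{2}\big)\big(\zeta+\tfrac{\epsilon'}{2}\big)\Big]\Big)$; $\theta\begin{bmatrix}\epsilon\\ \epsilon'\end{bmatrix}$ without argument means the value at $(0,\tau)$, and $\theta^k$ is the $k$-th power. *)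

theory Defs
  imports "HOL-Analysis.Analysis"
begin

definition theta :: "real \<Rightarrow> real \<Rightarrow> complex \<Rightarrow> complex \<Rightarrow> complex" where
  "theta eps eps' zeta tau =
     (\<Sum>\<^sub>\<infinity>n::int. exp (2 * pi * \<i> *
        ((1/2) * (of_int n + of_real eps / 2)^2 * tau
         + (of_int n + of_real eps / 2) * (zeta + of_real eps' / 2))))"

definition theta_const :: "real \<Rightarrow> real \<Rightarrow> complex \<Rightarrow> complex" where
  "theta_const eps eps' tau = theta eps eps' 0 tau"

end

theory Submission
  imports Defs
begin

text \<open>
  For \<open>\<epsilon> = 1\<close> the theta series runs over the odd integers, so a product of four theta
  constants is a sum over quadruples \<open>k\<close> of odd integers of \<open>exp (\<pi> i \<tau> |k|\<^sup>2 / 4)\<close> times a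
  character, which pairing \<open>k\<close> with \<open>-k\<close> turns into a cosine. For
  \<open>\<theta>\<^sup>3[1;0] \<theta>[1;2/3]\<close> the cosine depends on a single coordinate, for
  \<open>\<theta>\<^sup>4[1;1/3] - \<theta>\<^sup>4[1;2/3]\<close> on the coordinate sum \<open>s\<close>. The map \<open>k \<mapsto> H k / 2\<close>, with \<open>H\<close>
  the \<open>4 \<times> 4\<close> Hadamard matrix, preserves \<open>|k|\<^sup>2\<close> and moves \<open>s / 2\<close> into the first coordinate.
  Hence both sides are sums of the same weight \<open>exp (\<pi> i \<tau> |k|\<^sup>2 / 4) (cos (\<pi> k\<^sub>1 / 3) -
  cos (2 \<pi> k\<^sub>1 / 3))\<close>: the left side over all odd quadruples, halved, the right side over those
  with \<open>s \<equiv> 2 (mod 4)\<close>. Changing the sign of one coordinate exchanges the classes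
  \<open>s \<equiv> 0\<close> and \<open>s \<equiv> 2 (mod 4)\<close>, so the full sum is twice the restricted one.
\<close>

lemma
  fixes f :: "'a \<Rightarrow> complex" and g :: "'b \<Rightarrow> complex"
  assumes f: "f summable_on A" and g: "g summable_on B"
  shows summable_on_product: "(\<lambda>(x,y). f x * g y) summable_on A \<times> B"
    and infsum_product: "infsum f A * infsum g B = (\<Sum>\<^sub>\<infinity>(x,y)\<in>A \<times> B. f x * g y)"
proof -
  have fa: "(\<lambda>x. norm (f x)) summable_on A" and ga: "(\<lambda>y. norm (g y)) summable_on B"
    using f g summable_on_iff_abs_summable_on_complex by auto
  have "(\<lambda>z. norm ((\<lambda>(x,y). f x * g y) z)) summable_on A \<times> B"
  proof (rule iffD2[OF Infinite_Sum.abs_summable_on_Sigma_iff], intro conjI ballI)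
    show "(\<lambda>y. norm (case (x, y) of (x, y) \<Rightarrow> f x * g y)) summable_on B" for x
      using summable_on_cmult_right[OF ga, of "norm (f x)"] by (simp add: norm_mult)
    show "(\<lambda>x. norm (\<Sum>\<^sub>\<infinity>y\<in>B. norm (case (x, y) of (x, y) \<Rightarrow> f x * g y))) summable_on A"
      using summable_on_cmult_left[OF fa, of "\<Sum>\<^sub>\<infinity>y\<in>B. norm (g y)"]
      by (simp add: norm_mult infsum_cmult_right' infsum_nonneg)
  qed
  then show S: "(\<lambda>(x,y). f x * g y) summable_on A \<times> B"
    using summable_on_iff_abs_summable_on_complex by blast
  have "(\<Sum>\<^sub>\<infinity>(x,y)\<in>A \<times> B. f x * g y) = (\<Sum>\<^sub>\<infinity>x\<in>A. \<Sum>\<^sub>\<infinity>y\<in>B. f x * g y)"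
    using infsum_Sigma'_banach[of "\<lambda>x y. f x * g y" A "\<lambda>_. B"] S by simp
  also have "\<dots> = infsum f A * infsum g B"
    by (simp add: infsum_cmult_right' infsum_cmult_left')
  finally show "infsum f A * infsum g B = (\<Sum>\<^sub>\<infinity>(x,y)\<in>A \<times> B. f x * g y)" by simp
qed

lemma infsum_diff:
  fixes f g :: "'a \<Rightarrow> 'b::{topological_ab_group_add, t2_space}"
  assumes "f summable_on A" and "g summable_on A"
  shows "(\<Sum>\<^sub>\<infinity>x\<in>A. f x - g x) = infsum f A - infsum g A"
  using infsum_add[OF assms(1) summable_on_uminus[THEN iffD2, OF assms(2)]]
  by (simp add: infsum_uminus)

lemma summable_on_mult_bounded:
  fixes f h :: "'a \<Rightarrow> complex"
  assumes "f summable_on A" and "\<And>x. x \<in> A \<Longrightarrow> norm (h x) \<le> K"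
  shows "(\<lambda>x. f x * h x) summable_on A"
proof -
  have "(\<lambda>x. norm (f x) * K) summable_on A"
    using assms(1) summable_on_iff_abs_summable_on_complex summable_on_cmult_left by blast
  then have "(\<lambda>x. norm (f x * h x)) summable_on A"
    by (rule summable_on_comparison_test) (auto simp: norm_mult intro!: mult_left_mono assms(2))
  then show ?thesis using summable_on_iff_abs_summable_on_complex by blast
qed

text \<open>The terms at \<open>x\<close> and \<open>g x\<close> are complex conjugate up to the weight,
  so the imaginary parts cancel.\<close>
lemma infsum_mult_eq_infsum_mult_Re:
  fixes w h :: "'a \<Rightarrow> complex"
  assumes g: "bij_betw g A A" and w: "w summable_on A"
    and wg: "\<And>x. x \<in> A \<Longrightarrow> w (g x) = w x"
    and hg: "\<And>x. x \<in> A \<Longrightarrow> h (g x) = cnj (h x)"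
    and bounded: "\<And>x. x \<in> A \<Longrightarrow> norm (h x) \<le> K"
  shows "(\<Sum>\<^sub>\<infinity>x\<in>A. w x * h x) = (\<Sum>\<^sub>\<infinity>x\<in>A. w x * of_real (Re (h x)))"
proof -
  have sh: "(\<lambda>x. w x * h x) summable_on A"
    by (rule summable_on_mult_bounded[OF w bounded])
  have sc: "(\<lambda>x. w x * cnj (h x)) summable_on A"
    by (rule summable_on_mult_bounded[OF w]) (use bounded in auto)
  have "(\<Sum>\<^sub>\<infinity>x\<in>A. w x * h x) = (\<Sum>\<^sub>\<infinity>x\<in>A. w (g x) * h (g x))"
    by (rule infsum_reindex_bij_betw[OF g, symmetric])
  also have "\<dots> = (\<Sum>\<^sub>\<infinity>x\<in>A. w x * cnj (h x))"
    by (rule infsum_cong) (simp add: wg hg)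
  finally have conj: "(\<Sum>\<^sub>\<infinity>x\<in>A. w x * h x) = (\<Sum>\<^sub>\<infinity>x\<in>A. w x * cnj (h x))" .
  have "(\<Sum>\<^sub>\<infinity>x\<in>A. w x * of_real (Re (h x))) = (\<Sum>\<^sub>\<infinity>x\<in>A. (w x * h x + w x * cnj (h x)) * (1/2))"
    by (rule infsum_cong) (simp add: complex_add_cnj distrib_left[symmetric])
  also have "\<dots> = ((\<Sum>\<^sub>\<infinity>x\<in>A. w x * h x) + (\<Sum>\<^sub>\<infinity>x\<in>A. w x * cnj (h x))) * (1/2)"
    by (simp only: infsum_cmult_left' infsum_add[OF sh sc])
  finally show ?thesis by (simp add: conj)
qed

lemma summable_on_int_power_abs:
  fixes r :: real
  assumes "0 \<le> r" "r < 1"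
  shows "(\<lambda>m::int. r ^ nat \<bar>m\<bar>) summable_on UNIV"
proof -
  have geom: "(\<lambda>n::nat. r ^ n) summable_on UNIV" "(\<lambda>n::nat. r ^ Suc n) summable_on UNIV"
    using assms by (auto intro!: norm_summable_imp_summable_on simp: summable_geometric)
  have pos: "(\<lambda>m::int. r ^ nat \<bar>m\<bar>) summable_on range int"
    using geom(1) by (subst summable_on_reindex) (auto simp: inj_on_def o_def)
  have neg: "(\<lambda>m::int. r ^ nat \<bar>m\<bar>) summable_on range (\<lambda>n. - int n - 1)"
    using geom(2) by (subst summable_on_reindex) (auto simp: inj_on_def o_def nat_add_distrib)
  have split: "(UNIV::int set) = range int \<union> range (\<lambda>n. - int n - 1)"
  proof -
    have "m \<in> range int \<union> range (\<lambda>n. - int n - 1)" for m :: int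
    proof (cases "m \<ge> 0")
      case True then show ?thesis by (auto intro!: image_eqI[of _ _ "nat m"])
    next
      case False then show ?thesis by (auto intro!: image_eqI[of _ _ "nat (- m - 1)"])
    qed
    then show ?thesis by blast
  qed
  show ?thesis
    by (subst split, rule summable_on_Un_disjoint[OF pos neg]) auto
qed

definition odd_theta_term :: "complex \<Rightarrow> real \<Rightarrow> int \<Rightarrow> complex" where
  "odd_theta_term t e m = exp (pi * \<i> * (t * of_int (m^2) / 4 + of_int m * of_real e / 2))"

lemma norm_odd_theta_term: "norm (odd_theta_term t e m) = exp (- (pi * Im t / 4) * of_int (m^2))"
  by (simp add: odd_theta_term_def)

lemma theta_const_1_eq_infsum_odd:
  "theta_const 1 e t = (\<Sum>\<^sub>\<infinity>m\<in>{m. odd m}. odd_theta_term t e m)"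
proof -
  have bij: "bij_betw (\<lambda>n::int. 2*n+1) UNIV {m. odd m}"
    by (rule bij_betwI[where g = "\<lambda>m. m div 2"]) (auto elim!: oddE)
  have "theta_const 1 e t = (\<Sum>\<^sub>\<infinity>n. odd_theta_term t e (2*n+1))"
    unfolding theta_const_def theta_def odd_theta_term_def
    by (intro infsum_cong arg_cong[where f = exp]) (simp add: field_simps power2_eq_square)
  also have "\<dots> = (\<Sum>\<^sub>\<infinity>m\<in>{m. odd m}. odd_theta_term t e m)"
    by (rule infsum_reindex_bij_betw[OF bij])
  finally show ?thesis .
qed

lemma summable_on_odd_theta_term:
  assumes "Im t > 0"
  shows "odd_theta_term t e summable_on A"
proof -
  define c where "c = pi * Im t / 4"
  have c: "c > 0" using assms by (simp add: c_def)
  have "norm (odd_theta_term t e m) \<le> exp (-c) ^ nat \<bar>m\<bar>" for m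
  proof -
    have "\<bar>m\<bar> \<le> \<bar>m\<bar>^2"
      using self_le_power[of "\<bar>m\<bar>" 2] by (cases "m = 0") auto
    then have "real_of_int \<bar>m\<bar> \<le> of_int (m^2)"
      by (simp only: power2_abs of_int_le_iff)
    then have "norm (odd_theta_term t e m) \<le> exp (- c * of_int \<bar>m\<bar>)"
      using c by (simp add: norm_odd_theta_term c_def[symmetric] mult_left_mono)
    also have "\<dots> = exp (-c) ^ nat \<bar>m\<bar>"
      by (simp add: exp_of_nat_mult[symmetric])
    finally show ?thesis .
  qed
  then have "(\<lambda>m. norm (odd_theta_term t e m)) summable_on UNIV"
    by (intro summable_on_comparison_test[OF summable_on_int_power_abs[of "exp (-c)"]]) (use c in auto)
  then show ?thesis
    using summable_on_iff_abs_summable_on_complex summable_on_subset_banach by blast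
qed

type_synonym int4 = "int \<times> int \<times> int \<times> int"

definition odd4 :: "int4 set" where
  "odd4 = {m. odd m} \<times> {m. odd m} \<times> {m. odd m} \<times> {m. odd m}"

lemma odd4E:
  assumes "k \<in> odd4"
  obtains a b c d where "k = (2*a+1, 2*b+1, 2*c+1, 2*d+1)"
  using assms by (cases k) (auto simp: odd4_def elim!: oddE)

fun gauss4 :: "complex \<Rightarrow> int4 \<Rightarrow> complex" where
  "gauss4 t (a,b,c,d) = exp (pi * \<i> * t * of_int (a^2 + b^2 + c^2 + d^2) / 4)"

fun dot4 :: "real \<times> real \<times> real \<times> real \<Rightarrow> int4 \<Rightarrow> real" where
  "dot4 (e1,e2,e3,e4) (a,b,c,d) = a*e1 + b*e2 + c*e3 + d*e4"

lemma odd_theta_term_product4: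
  "odd_theta_term t e1 a * (odd_theta_term t e2 b * (odd_theta_term t e3 c * odd_theta_term t e4 d))
     = gauss4 t (a,b,c,d) * exp (pi * \<i> * of_real (dot4 (e1,e2,e3,e4) (a,b,c,d)) / 2)"
  unfolding odd_theta_term_def gauss4.simps dot4.simps exp_add[symmetric]
  by (rule arg_cong[where f = exp]) (simp add: field_simps)

lemma theta_const_product4:
  assumes "Im t > 0"
  shows "(\<lambda>k. gauss4 t k * exp (pi * \<i> * of_real (dot4 (e1,e2,e3,e4) k) / 2)) summable_on odd4"
    and "theta_const 1 e1 t * (theta_const 1 e2 t * (theta_const 1 e3 t * theta_const 1 e4 t))
           = (\<Sum>\<^sub>\<infinity>k\<in>odd4. gauss4 t k * exp (pi * \<i> * of_real (dot4 (e1,e2,e3,e4) k) / 2))"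
    (is "_ = (\<Sum>\<^sub>\<infinity>k\<in>odd4. ?f k)")
proof -
  let ?O = "{m::int. odd m}"
  note s = summable_on_odd_theta_term[OF assms(1), where A = ?O]
  note p34 = summable_on_product[OF s[of e3] s[of e4]] infsum_product[OF s[of e3] s[of e4]]
  note p234 = summable_on_product[OF s[of e2] p34(1)] infsum_product[OF s[of e2] p34(1)]
  note p1234 = summable_on_product[OF s[of e1] p234(1)] infsum_product[OF s[of e1] p234(1)]
  have f: "(\<lambda>(a, y). odd_theta_term t e1 a * (case y of (b, y) \<Rightarrow> odd_theta_term t e2 b
             * (case y of (c, d) \<Rightarrow> odd_theta_term t e3 c * odd_theta_term t e4 d))) = ?f"
    by (auto simp: odd_theta_term_product4)
  show "?f summable_on odd4"
    using p1234(1) unfolding f odd4_def .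
  show "theta_const 1 e1 t * (theta_const 1 e2 t * (theta_const 1 e3 t * theta_const 1 e4 t))
          = (\<Sum>\<^sub>\<infinity>k\<in>odd4. ?f k)"
    unfolding theta_const_1_eq_infsum_odd p34(2) p234(2) p1234(2) f odd4_def ..
qed

lemma summable_on_gauss4:
  assumes "Im t > 0"
  shows "gauss4 t summable_on odd4"
proof -
  have "dot4 (0,0,0,0) k = 0" for k
    by (cases k) simp
  then show ?thesis
    using theta_const_product4(1)[OF assms, of 0 0 0 0] by simp
qed

lemma bij_betw_odd4_involution:
  assumes "\<And>k. f (f k) = k" and "\<And>k. k \<in> odd4 \<Longrightarrow> f k \<in> odd4"
  shows "bij_betw f odd4 odd4"
  by (rule bij_betwI[where g = f]) (use assms in auto)

lemma theta_const_product4_cos: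
  assumes "Im t > 0"
  shows "theta_const 1 e1 t * (theta_const 1 e2 t * (theta_const 1 e3 t * theta_const 1 e4 t))
           = (\<Sum>\<^sub>\<infinity>k\<in>odd4. gauss4 t k * of_real (cos (pi * dot4 (e1,e2,e3,e4) k / 2)))"
proof -
  let ?neg = "\<lambda>(a,b,c,d). (-a,-b,-c,-d) :: int4"
  let ?h = "\<lambda>k. exp (pi * \<i> * of_real (dot4 (e1,e2,e3,e4) k) / 2)"
  have bij: "bij_betw ?neg odd4 odd4"
    by (rule bij_betw_odd4_involution) (auto simp: odd4_def)
  have gauss: "gauss4 t (?neg k) = gauss4 t k" for k
    by (cases k) simp
  have conj: "?h (?neg k) = cnj (?h k)" for k
  proof -
    have "dot4 (e1,e2,e3,e4) (?neg k) = - dot4 (e1,e2,e3,e4) k"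
      by (cases k) simp
    then show ?thesis by (simp add: exp_cnj)
  qed
  have "(\<Sum>\<^sub>\<infinity>k\<in>odd4. gauss4 t k * ?h k) = (\<Sum>\<^sub>\<infinity>k\<in>odd4. gauss4 t k * of_real (Re (?h k)))"
    using infsum_mult_eq_infsum_mult_Re[where g = ?neg and w = "gauss4 t" and h = ?h and K = 1]
      bij summable_on_gauss4[OF assms] gauss conj by simp
  then show ?thesis
    by (simp add: theta_const_product4(2)[OF assms] Re_exp)
qed

definition cos_third_diff :: "int \<Rightarrow> real" where
  "cos_third_diff j = cos (pi * j / 3) - cos (2 * pi * j / 3)"

lemma cos_third_diff_even:
  assumes "even j"
  shows "cos_third_diff j = 0"
proof -
  obtain i where "j = 2 * i" using assms by (rule evenE)
  then have "cos (2 * pi * j / 3) = cos (2 * pi * i - pi * j / 3)"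
    by (simp add: field_simps)
  also have "\<dots> = cos (pi * j / 3)"
    by (simp only: cos_diff cos_int_2pin sin_int_2pin)
  finally show ?thesis
    by (simp add: cos_third_diff_def)
qed

lemma cos_third_diff_odd:
  assumes "odd j"
  shows "cos_third_diff j = 2 * cos (pi * j / 3)"
proof -
  have "cos (2 * pi * j / 3) = cos (pi * j - pi * j / 3)"
    by (simp add: field_simps)
  also have "\<dots> = - cos (pi * j / 3)"
    using assms by (simp only: cos_diff cos_npi_int sin_npi_int) simp
  finally show ?thesis
    by (simp add: cos_third_diff_def)
qed

lemma abs_cos_third_diff_le: "\<bar>cos_third_diff j\<bar> \<le> 2"
  using cos_le_one[of "pi * j / 3"] cos_ge_minus_one[of "pi * j / 3"]
    cos_le_one[of "2 * pi * j / 3"] cos_ge_minus_one[of "2 * pi * j / 3"]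
  unfolding cos_third_diff_def by linarith

definition odd4_weight :: "complex \<Rightarrow> int4 \<Rightarrow> complex" where
  "odd4_weight t k = gauss4 t k * of_real (cos_third_diff (fst k))"

lemma summable_on_odd4_weight:
  assumes "Im t > 0" and "A \<subseteq> odd4"
  shows "odd4_weight t summable_on A"
proof -
  have "odd4_weight t summable_on odd4"
    unfolding odd4_weight_def
    by (rule summable_on_mult_bounded[OF summable_on_gauss4[OF assms(1)], where K = 2])
       (simp add: abs_cos_third_diff_le)
  then show ?thesis
    using assms(2) summable_on_subset_banach by blast
qed

definition odd4_mod4 :: "int \<Rightarrow> int4 set" where
  "odd4_mod4 r = odd4 \<inter> {(a,b,c,d). (a+b+c+d) mod 4 = r}"

lemma odd4_mod4_iff:
  "(2*a+1, 2*b+1, 2*c+1, 2*d+1) \<in> odd4_mod4 r \<longleftrightarrow> r = (if odd (a+b+c+d) then 2 else 0)"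
proof -
  have "2*a+1 + (2*b+1) + (2*c+1) + (2*d+1) = 2 * (a+b+c+d) + 4"
    by simp
  then have "(2*a+1 + (2*b+1) + (2*c+1) + (2*d+1)) mod 4 = (if odd (a+b+c+d) then 2 else 0)"
    by presburger
  then show ?thesis
    by (auto simp: odd4_mod4_def odd4_def)
qed

lemma neg_snd_odd4_mod4: "(a, -b, c, d) \<in> odd4_mod4 0 \<longleftrightarrow> (a, b, c, d) \<in> odd4_mod4 2"
proof (cases "(a, b, c, d) \<in> odd4")
  case True
  then obtain a' b' c' d' where abcd: "(a, b, c, d) = (2*a'+1, 2*b'+1, 2*c'+1, 2*d'+1)"
    by (rule odd4E)
  then have neg: "(a, -b, c, d) = (2*a'+1, 2*(-b'-1)+1, 2*c'+1, 2*d'+1)"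
    by simp
  have "odd (a' + (-b'-1) + c' + d') \<longleftrightarrow> even (a'+b'+c'+d')"
    by presburger
  then show ?thesis
    unfolding neg abcd odd4_mod4_iff by (simp only:) simp
next
  case False
  then show ?thesis
    by (auto simp: odd4_mod4_def odd4_def)
qed

fun hadamard4 :: "int4 \<Rightarrow> int4" where
  "hadamard4 (a,b,c,d) = ((a+b+c+d) div 2, (a+b-c-d) div 2, (a-b+c-d) div 2, (a-b-c+d) div 2)"

lemma hadamard4_odd:
  "hadamard4 (2*a+1, 2*b+1, 2*c+1, 2*d+1) = (a+b+c+d+2, a+b-c-d, a-b+c-d, a-b-c+d)"
proof -
  have "2*a+1 + (2*b+1) + (2*c+1) + (2*d+1) = 2*(a+b+c+d+2)"
       "2*a+1 + (2*b+1) - (2*c+1) - (2*d+1) = 2*(a+b-c-d)"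
       "2*a+1 - (2*b+1) + (2*c+1) - (2*d+1) = 2*(a-b+c-d)"
       "2*a+1 - (2*b+1) - (2*c+1) + (2*d+1) = 2*(a-b-c+d)"
    by simp_all
  then show ?thesis by simp
qed

lemma hadamard4_hadamard4:
  assumes "k \<in> odd4"
  shows "hadamard4 (hadamard4 k) = k"
proof -
  obtain a b c d where k: "k = (2*a+1, 2*b+1, 2*c+1, 2*d+1)" using assms by (rule odd4E)
  have "a+b+c+d+2 + (a+b-c-d) + (a-b+c-d) + (a-b-c+d) = 2*(2*a+1)"
       "a+b+c+d+2 + (a+b-c-d) - (a-b+c-d) - (a-b-c+d) = 2*(2*b+1)"
       "a+b+c+d+2 - (a+b-c-d) + (a-b+c-d) - (a-b-c+d) = 2*(2*c+1)"
       "a+b+c+d+2 - (a+b-c-d) - (a-b+c-d) + (a-b-c+d) = 2*(2*d+1)"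
    by simp_all
  then show ?thesis
    unfolding k hadamard4_odd by (simp only: hadamard4.simps) simp
qed

lemma gauss4_hadamard4:
  assumes "k \<in> odd4"
  shows "gauss4 t (hadamard4 k) = gauss4 t k"
proof -
  obtain a b c d where k: "k = (2*a+1, 2*b+1, 2*c+1, 2*d+1)" using assms by (rule odd4E)
  show ?thesis
    unfolding k hadamard4_odd by (simp add: power2_eq_square algebra_simps)
qed

lemma bij_betw_hadamard4: "bij_betw hadamard4 (hadamard4 ` odd4) odd4"
proof (rule bij_betwI[where g = hadamard4])
  show "hadamard4 \<in> hadamard4 ` odd4 \<rightarrow> odd4"
    using hadamard4_hadamard4 by auto
qed (auto simp del: hadamard4.simps simp: hadamard4_hadamard4)

lemma hadamard4_odd_mem_odd4_iff:
  "hadamard4 (2*a+1, 2*b+1, 2*c+1, 2*d+1) \<in> odd4 \<longleftrightarrow> odd (a+b+c+d)"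
proof -
  have "a+b-c-d = (a+b+c+d) - 2*(c+d)" "a-b+c-d = (a+b+c+d) - 2*(b+d)" "a-b-c+d = (a+b+c+d) - 2*(b+c)"
    by simp_all
  then show ?thesis
    unfolding hadamard4_odd odd4_def by simp
qed

lemma hadamard4_image_odd_fst: "{k \<in> hadamard4 ` odd4. odd (fst k)} = odd4_mod4 2"
proof (intro equalityI subsetI)
  fix k assume "k \<in> {k \<in> hadamard4 ` odd4. odd (fst k)}"
  then obtain m where m: "m \<in> odd4" "k = hadamard4 m" and odd: "odd (fst k)" by auto
  obtain a b c d where abcd: "m = (2*a+1, 2*b+1, 2*c+1, 2*d+1)" using m(1) by (rule odd4E)
  have "odd (a+b+c+d)"
    using odd unfolding m(2) abcd hadamard4_odd by simp
  then have "k \<in> odd4"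
    unfolding m(2) abcd hadamard4_odd_mem_odd4_iff .
  then show "k \<in> odd4_mod4 2"
    unfolding odd4_mod4_def m(2) abcd hadamard4_odd by simp
next
  fix k assume k: "k \<in> odd4_mod4 2"
  then have "k \<in> odd4" by (simp add: odd4_mod4_def)
  then obtain a b c d where abcd: "k = (2*a+1, 2*b+1, 2*c+1, 2*d+1)" by (rule odd4E)
  have "odd (a+b+c+d)"
    using k unfolding abcd odd4_mod4_iff by presburger
  then have "hadamard4 k \<in> odd4"
    unfolding abcd hadamard4_odd_mem_odd4_iff .
  moreover have "hadamard4 (hadamard4 k) = k"
    using \<open>k \<in> odd4\<close> by (rule hadamard4_hadamard4)
  ultimately have "k \<in> hadamard4 ` odd4"
    by (metis image_eqI)
  moreover have "odd (fst k)"
    unfolding abcd by simp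
  ultimately show "k \<in> {k \<in> hadamard4 ` odd4. odd (fst k)}" by simp
qed

lemma theta_cube_mult_theta_eq_infsum:
  assumes "Im t > 0"
  shows "theta_const 1 0 t ^ 3 * theta_const 1 (2/3) t = (\<Sum>\<^sub>\<infinity>k\<in>odd4. odd4_weight t k) / 2"
proof -
  let ?swap = "\<lambda>(a,b,c,d). (d,b,c,a) :: int4"
  let ?f = "\<lambda>k. gauss4 t k * of_real (cos (pi * dot4 (0,0,0,2/3) k / 2))"
  have bij: "bij_betw ?swap odd4 odd4"
    by (rule bij_betw_odd4_involution) (auto simp: odd4_def)
  have "theta_const 1 0 t ^ 3 * theta_const 1 (2/3) t = (\<Sum>\<^sub>\<infinity>k\<in>odd4. ?f k)"
    using theta_const_product4_cos[OF assms, of 0 0 0 "2/3"] by (simp add: power3_eq_cube mult.assoc)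
  also have "\<dots> = (\<Sum>\<^sub>\<infinity>k\<in>odd4. ?f (?swap k))"
    by (rule infsum_reindex_bij_betw[OF bij, symmetric])
  also have "\<dots> = (\<Sum>\<^sub>\<infinity>k\<in>odd4. odd4_weight t k * (1/2))"
  proof (rule infsum_cong)
    fix k assume "k \<in> odd4"
    then obtain a b c d where k: "k = (a,b,c,d)" and "odd a"
      by (cases k) (auto simp: odd4_def)
    have "pi * dot4 (0,0,0,2/3) (?swap k) / 2 = pi * a / 3"
      unfolding k by simp
    then show "?f (?swap k) = odd4_weight t k * (1/2)"
      using cos_third_diff_odd[OF \<open>odd a\<close>] by (simp add: k odd4_weight_def algebra_simps)
  qed
  also have "\<dots> = (\<Sum>\<^sub>\<infinity>k\<in>odd4. odd4_weight t k) * (1/2)"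
    by (rule infsum_cmult_left')
  finally show ?thesis
    by simp
qed

lemma theta_fourth_power_diff_eq_infsum:
  assumes "Im t > 0"
  shows "theta_const 1 (1/3) t ^ 4 - theta_const 1 (2/3) t ^ 4
           = (\<Sum>\<^sub>\<infinity>k\<in>odd4_mod4 2. odd4_weight t k)"
proof -
  let ?c = "\<lambda>e k. of_real (cos (pi * dot4 (e,e,e,e) k / 2))"
  have power4: "theta_const 1 e t ^ 4 = (\<Sum>\<^sub>\<infinity>k\<in>odd4. gauss4 t k * ?c e k)" for e
    using theta_const_product4_cos[OF assms, of e e e e]
    by (simp add: power4_eq_xxxx mult.assoc)
  have summable: "(\<lambda>k. gauss4 t k * ?c e k) summable_on odd4" for e
    by (rule summable_on_mult_bounded[OF summable_on_gauss4[OF assms], where K = 1]) simp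
  have "theta_const 1 (1/3) t ^ 4 - theta_const 1 (2/3) t ^ 4
          = (\<Sum>\<^sub>\<infinity>k\<in>odd4. gauss4 t k * ?c (1/3) k - gauss4 t k * ?c (2/3) k)"
    unfolding power4 by (rule infsum_diff[OF summable summable, symmetric])
  also have "\<dots> = (\<Sum>\<^sub>\<infinity>k\<in>odd4. odd4_weight t (hadamard4 k))"
    \<comment> \<open>the first coordinate of \<open>hadamard4 k\<close> is half the coordinate sum of \<open>k\<close>\<close>
  proof (rule infsum_cong)
    fix k assume k: "k \<in> odd4"
    then obtain a b c d where abcd: "k = (2*a+1, 2*b+1, 2*c+1, 2*d+1)" by (rule odd4E)
    have phases: "pi * dot4 (1/3,1/3,1/3,1/3) k / 2 = pi * of_int (a+b+c+d+2) / 3"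
         "pi * dot4 (2/3,2/3,2/3,2/3) k / 2 = 2 * pi * of_int (a+b+c+d+2) / 3"
      unfolding abcd by (simp_all add: field_simps)
    have cos_diff: "cos (pi * dot4 (1/3,1/3,1/3,1/3) k / 2) - cos (pi * dot4 (2/3,2/3,2/3,2/3) k / 2)
                 = cos_third_diff (fst (hadamard4 k))"
      unfolding phases by (simp add: abcd hadamard4_odd cos_third_diff_def add_ac)
    show "gauss4 t k * ?c (1/3) k - gauss4 t k * ?c (2/3) k = odd4_weight t (hadamard4 k)"
      unfolding odd4_weight_def gauss4_hadamard4[OF k] cos_diff[symmetric]
      by (simp add: right_diff_distrib)
  qed
  also have "\<dots> = (\<Sum>\<^sub>\<infinity>k\<in>hadamard4 ` odd4. odd4_weight t (hadamard4 (hadamard4 k)))"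
    by (rule infsum_reindex_bij_betw[OF bij_betw_hadamard4, symmetric])
  also have "\<dots> = (\<Sum>\<^sub>\<infinity>k\<in>hadamard4 ` odd4. odd4_weight t k)"
    by (rule infsum_cong) (auto simp del: hadamard4.simps simp: hadamard4_hadamard4)
  also have "\<dots> = (\<Sum>\<^sub>\<infinity>k\<in>{k \<in> hadamard4 ` odd4. odd (fst k)}. odd4_weight t k)"
    by (rule infsum_cong_neutral) (auto simp: odd4_weight_def cos_third_diff_even)
  finally show ?thesis
    by (simp only: hadamard4_image_odd_fst)
qed

lemma infsum_odd4_weight_eq_twice_mod4:
  assumes "Im t > 0"
  shows "(\<Sum>\<^sub>\<infinity>k\<in>odd4. odd4_weight t k) = 2 * (\<Sum>\<^sub>\<infinity>k\<in>odd4_mod4 2. odd4_weight t k)"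
proof -
  let ?neg_snd = "\<lambda>(a,b,c,d). (a,-b,c,d) :: int4"
  have summable: "odd4_weight t summable_on odd4_mod4 r" for r
    by (rule summable_on_odd4_weight[OF assms]) (auto simp: odd4_mod4_def)
  have "odd4 = odd4_mod4 2 \<union> odd4_mod4 0"
  proof (intro equalityI subsetI)
    fix k assume "k \<in> odd4"
    then obtain a b c d where "k = (2*a+1, 2*b+1, 2*c+1, 2*d+1)" by (rule odd4E)
    then show "k \<in> odd4_mod4 2 \<union> odd4_mod4 0"
      by (simp add: odd4_mod4_iff)
  qed (auto simp: odd4_mod4_def)
  moreover have "odd4_mod4 2 \<inter> odd4_mod4 0 = {}"
    by (auto simp: odd4_mod4_def)
  ultimately have "(\<Sum>\<^sub>\<infinity>k\<in>odd4. odd4_weight t k)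
      = (\<Sum>\<^sub>\<infinity>k\<in>odd4_mod4 2. odd4_weight t k) + (\<Sum>\<^sub>\<infinity>k\<in>odd4_mod4 0. odd4_weight t k)"
    by (metis infsum_Un_disjoint[OF summable summable])
  also have "(\<Sum>\<^sub>\<infinity>k\<in>odd4_mod4 0. odd4_weight t k) = (\<Sum>\<^sub>\<infinity>k\<in>odd4_mod4 2. odd4_weight t (?neg_snd k))"
  proof (rule infsum_reindex_bij_betw[symmetric], rule bij_betwI[where g = ?neg_snd])
    show "?neg_snd \<in> odd4_mod4 2 \<rightarrow> odd4_mod4 0" "?neg_snd \<in> odd4_mod4 0 \<rightarrow> odd4_mod4 2"
      using neg_snd_odd4_mod4 by force+
  qed auto
  also have "(\<Sum>\<^sub>\<infinity>k\<in>odd4_mod4 2. odd4_weight t (?neg_snd k)) = (\<Sum>\<^sub>\<infinity>k\<in>odd4_mod4 2. odd4_weight t k)"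
    by (rule infsum_cong) (auto simp: odd4_weight_def)
  finally show ?thesis
    by simp
qed

theorem mainTheorem7:
  fixes tau :: complex
  assumes "Im tau > 0"
  shows "(theta_const 1 0 tau)^3 * theta_const 1 (2/3) tau
           - (theta_const 1 (1/3) tau)^4 + (theta_const 1 (2/3) tau)^4 = 0"
proof -
  have "(theta_const 1 0 tau)^3 * theta_const 1 (2/3) tau
          = (theta_const 1 (1/3) tau)^4 - (theta_const 1 (2/3) tau)^4"
    using theta_cube_mult_theta_eq_infsum[OF assms] infsum_odd4_weight_eq_twice_mod4[OF assms]
      theta_fourth_power_diff_eq_infsum[OF assms]
    by simp
  then show ?thesis
    by (simp add: algebra_simps)
qed

end
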